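(* In the smart-metering model described in the context, for every policy $\mathbf q\in\mathcal Q_A$ there exists $\mathbf q'\in\mathcal Q_B$ with $L_T(\mathbf q')\le L_T(\mathbf q)$; thus there is no loss of optimality in restricting attention to $\mathcal Q_B$. Moreover, for every $\mathbf q\in\mathcal Q_B$, $$L_T(\mathbf q)=\frac1T\sum_{t=1}^T I^{\mathbf q}(X_t,S_t;Y_t\mid Y^{t-1}),$$ where $I^{\mathbf q}(X_t,S_t;Y_t\mid Y^{t-1})=\sum_{x_t,s_t,y^t}P^{\mathbf q}(X_t=x_t,S_t=s_t,Y^t=y^t)\log\frac{q_t(y_t\mid x_t,s_t,y^{t-1})}{P^{\mathbf q}(Y_t=y_t\mid Y^{t-1}=y^{t-1})}$.
   Context: Let $\mathcal X=\{0,\dots,m_x\}$, $\mathcal Y=\{0,\dots,m_y\}$, $\mathcal S=\{0,\dots,m_s\}$ with $m_x\le m_y$. The demand $\{X_t\}$ is a time-homogeneous first-order Markov chain on $\mathcal X$ with irreducible aperiodic transition matrix $Q$ and initial pmf $P_{X_1}$; $S_1\sim P_{S_1}$ independent of $\{X_t\}$. For an integer $w$ let $\mathcal Y_\circ(w)=\{y\in\mathcal Y:w+y\in\mathcal S\}$. A charging policy is a sequence of conditional pmfs $q_t(y\mid x^t,s^t,y^{t-1})$ on $\mathcal Y$ with $q_t(\mathcal Y_\circ(s_t-x_t)\mid x^t,s^t,y^{t-1})=1$; $\mathcal Q_A$ is the set of all such policies, and $\mathcal Q_B\subset\mathcal Q_A$ is the subset of policies for which $q_t(y\mid x^t,s^t,y^{t-1})$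 depends only on $(x_t,s_t,y^{t-1})$, written $q_t(y\mid x_t,s_t,y^{t-1})$. The joint law is $P^{\mathbf q}(s^T,x^T,y^T)=P_{S_1}(s_1)P_{X_1}(x_1)q_1(y_1|x_1,s_1)\prod_{t=2}^T\mathbf 1\{s_t=s_{t-1}-x_{t-1}+y_{t-1}\}Q(x_t|x_{t-1})q_t(y_t|x^t,s^t,y^{t-1})$. $L_T(\mathbf q)=\frac1TI^{\mathbf q}(X^T,S_1;Y^T)$. *)

theory Defs
  imports Complex_Main
begin

text \<open>Sequences of length n with entries in {0..m}; list position i is time i+1.\<close>
definition seqs :: "nat \<Rightarrow> nat \<Rightarrow> nat list set" where
  "seqs n m = {xs. length xs = n \<and> set xs \<subseteq> {0..m}}"

text \<open>A (general, history-dependent) policy: q t xs ss ys y = q_t(y | x^t, s^t, y^(t-1)),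
  where length xs = length ss = t and length ys = t - 1.\<close>
type_synonym policy = "nat \<Rightarrow> nat list \<Rightarrow> nat list \<Rightarrow> nat list \<Rightarrow> nat \<Rightarrow> real"

text \<open>A Q_B-type kernel r t x s ys y = q_t(y | x_t, s_t, y^(t-1)), and its embedding as a policy.\<close>
type_synonym policyB = "nat \<Rightarrow> nat \<Rightarrow> nat \<Rightarrow> nat list \<Rightarrow> nat \<Rightarrow> real"

definition embedB :: "policyB \<Rightarrow> policy" where
  "embedB r = (\<lambda>t xs ss ys y. r t (last xs) (last ss) ys y)"

definition policyA :: "nat \<Rightarrow> nat \<Rightarrow> nat \<Rightarrow> nat \<Rightarrow> policy \<Rightarrow> bool" where
  "policyA mx my ms T q \<longleftrightarrow>
    (\<forall>t\<in>{1..T}. \<forall>xs\<in>seqs t mx. \<forall>ss\<in>seqs t ms. \<forall>ys\<in>seqs (t - 1) my.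
       (\<forall>y\<in>{0..my}. 0 \<le> q t xs ss ys y) \<and>
       (\<Sum>y\<in>{0..my}. q t xs ss ys y) = 1 \<and>
       (\<Sum>y\<in>{y\<in>{0..my}. int (last ss) - int (last xs) + int y \<in> {0..int ms}}.
           q t xs ss ys y) = 1)"

text \<open>Joint law P^q(s^T, x^T, y^T); Q x x' = Q(x' | x).\<close>
definition joint :: "nat \<Rightarrow> (nat \<Rightarrow> nat \<Rightarrow> real) \<Rightarrow> (nat \<Rightarrow> real) \<Rightarrow> (nat \<Rightarrow> real)
    \<Rightarrow> policy \<Rightarrow> nat list \<Rightarrow> nat list \<Rightarrow> nat list \<Rightarrow> real" where
  "joint T Q PX1 PS1 q ss xs ys =
     PS1 (ss ! 0) * PX1 (xs ! 0) *
     (\<Prod>t\<in>{1..T}. q t (take t xs) (take t ss) (take (t - 1) ys) (ys ! (t - 1))) *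
     (\<Prod>t\<in>{2..T}. (if int (ss ! (t - 1)) = int (ss ! (t - 2)) - int (xs ! (t - 2)) + int (ys ! (t - 2))
                     then 1 else 0) * Q (xs ! (t - 2)) (xs ! (t - 1)))"

definition prob_ev :: "nat \<Rightarrow> nat \<Rightarrow> nat \<Rightarrow> nat \<Rightarrow> (nat \<Rightarrow> nat \<Rightarrow> real) \<Rightarrow> (nat \<Rightarrow> real)
    \<Rightarrow> (nat \<Rightarrow> real) \<Rightarrow> policy \<Rightarrow> (nat list \<Rightarrow> nat list \<Rightarrow> nat list \<Rightarrow> bool) \<Rightarrow> real" where
  "prob_ev mx my ms T Q PX1 PS1 q F =
     (\<Sum>ss\<in>seqs T ms. \<Sum>xs\<in>seqs T mx. \<Sum>ys\<in>seqs T my.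
        if F ss xs ys then joint T Q PX1 PS1 q ss xs ys else 0)"

definition plogp :: "real \<Rightarrow> real \<Rightarrow> real" where
  "plogp p r = (if p = 0 then 0 else p * ln (p / r))"

text \<open>L_T(q) = (1/T) I^q(X^T, S_1; Y^T).\<close>
definition leakage :: "nat \<Rightarrow> nat \<Rightarrow> nat \<Rightarrow> nat \<Rightarrow> (nat \<Rightarrow> nat \<Rightarrow> real) \<Rightarrow> (nat \<Rightarrow> real)
    \<Rightarrow> (nat \<Rightarrow> real) \<Rightarrow> policy \<Rightarrow> real" where
  "leakage mx my ms T Q PX1 PS1 q =
     (let P = prob_ev mx my ms T Q PX1 PS1 q in
      (\<Sum>xs\<in>seqs T mx. \<Sum>s1\<in>{0..ms}. \<Sum>ys\<in>seqs T my.
         plogp (P (\<lambda>ss' xs' ys'. xs' = xs \<and> ss' ! 0 = s1 \<and> ys' = ys))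
               (P (\<lambda>ss' xs' ys'. xs' = xs \<and> ss' ! 0 = s1) * P (\<lambda>ss' xs' ys'. ys' = ys))) / real T)"

definition cond_mi :: "nat \<Rightarrow> nat \<Rightarrow> nat \<Rightarrow> nat \<Rightarrow> (nat \<Rightarrow> nat \<Rightarrow> real) \<Rightarrow> (nat \<Rightarrow> real)
    \<Rightarrow> (nat \<Rightarrow> real) \<Rightarrow> policyB \<Rightarrow> nat \<Rightarrow> real" where
  "cond_mi mx my ms T Q PX1 PS1 r t =
     (let P = prob_ev mx my ms T Q PX1 PS1 (embedB r) in
      (\<Sum>x\<in>{0..mx}. \<Sum>s\<in>{0..ms}. \<Sum>yt\<in>seqs t my.
         (let pj = P (\<lambda>ss' xs' ys'. xs' ! (t - 1) = x \<and> ss' ! (t - 1) = s \<and> take t ys' = yt);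
              pc = P (\<lambda>ss' xs' ys'. take t ys' = yt) / P (\<lambda>ss' xs' ys'. take (t - 1) ys' = butlast yt)
          in if pj = 0 then 0 else pj * ln (r t x s (butlast yt) (last yt) / pc))))"

fun mpow :: "(nat \<Rightarrow> nat \<Rightarrow> real) \<Rightarrow> nat \<Rightarrow> nat \<Rightarrow> nat \<Rightarrow> nat \<Rightarrow> real" where
  "mpow Q m 0 i j = (if i = j then 1 else 0)"
| "mpow Q m (Suc n) i j = (\<Sum>k\<in>{0..m}. mpow Q m n i k * Q k j)"

definition stochastic :: "(nat \<Rightarrow> nat \<Rightarrow> real) \<Rightarrow> nat \<Rightarrow> bool" where
  "stochastic Q m \<longleftrightarrow> (\<forall>i\<in>{0..m}. (\<forall>j\<in>{0..m}. 0 \<le> Q i j) \<and> (\<Sum>j\<in>{0..m}. Q i j) = 1)"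

definition irreducible_mc :: "(nat \<Rightarrow> nat \<Rightarrow> real) \<Rightarrow> nat \<Rightarrow> bool" where
  "irreducible_mc Q m \<longleftrightarrow> (\<forall>i\<in>{0..m}. \<forall>j\<in>{0..m}. \<exists>n>0. mpow Q m n i j > 0)"

definition aperiodic_mc :: "(nat \<Rightarrow> nat \<Rightarrow> real) \<Rightarrow> nat \<Rightarrow> bool" where
  "aperiodic_mc Q m \<longleftrightarrow> (\<forall>i\<in>{0..m}. Gcd {n. n > 0 \<and> mpow Q m n i i > 0} = 1)"

definition is_pmf_on :: "(nat \<Rightarrow> real) \<Rightarrow> nat \<Rightarrow> bool" where
  "is_pmf_on p m \<longleftrightarrow> (\<forall>i\<in>{0..m}. 0 \<le> p i) \<and> (\<Sum>i\<in>{0..m}. p i) = 1"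

end

theory Submission imports Defs begin

text \<open>By the chain rule the leakage is \<open>\<Sum>\<^sub>t E[ln q\<^sub>t(Y\<^sub>t | X\<^sup>t, S\<^sup>t, Y\<^sup>t\<^sup>-\<^sup>1) / P(Y\<^sub>t | Y\<^sup>t\<^sup>-\<^sup>1)]\<close>:
  on the support the battery path is determined by \<open>S\<^sub>1\<close>, \<open>X\<^sup>T\<close> and \<open>Y\<^sup>T\<close>, so \<open>P(x\<^sup>T, s\<^sub>1, y\<^sup>T)\<close>
  is the product of the initial laws, the demand transitions and the policy kernels, while
  \<open>P(x\<^sup>T, s\<^sub>1)\<close> is the product of the first two. For a policy in \<open>Q\<^sub>B\<close> this is the
  claimed formula. For a general policy \<open>q\<close> take
  \<open>r\<^sub>t(y | x, s, y\<^sup>t\<^sup>-\<^sup>1) = P\<^sup>q(Y\<^sub>t = y | X\<^sub>t = x, S\<^sub>t = s, Y\<^sup>t\<^sup>-\<^sup>1)\<close>. Induction on \<open>t\<close> shows that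
  \<open>r\<close> induces the same law of \<open>(X\<^sub>t, S\<^sub>t, Y\<^sup>t)\<close> as \<open>q\<close>, hence the same output law, so the
  \<open>t\<close>-th term of \<open>r\<close> is \<open>E\<^sub>q[ln r\<^sub>t / P(Y\<^sub>t | Y\<^sup>t\<^sup>-\<^sup>1)]\<close>; by \<open>ln u \<le> u - 1\<close> it exceeds the
  \<open>t\<close>-th term of \<open>q\<close> by at most \<open>E\<^sub>q[r\<^sub>t / q\<^sub>t] - 1 \<le> 0\<close>.\<close>

section \<open>Sequences and the joint law\<close>

lemma finite_seqs [simp]: "finite (seqs n m)"
proof -
  have "seqs n m = {xs. set xs \<subseteq> {0..m} \<and> length xs = n}" by (auto simp: seqs_def)
  then show ?thesis using finite_lists_length_eq[of "{0..m}" n] by simp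
qed

lemma seqs_0 [simp]: "seqs 0 m = {[]}"
  by (auto simp: seqs_def)

lemma snoc_in_seqs_iff [simp]: "l @ [a] \<in> seqs (Suc n) m \<longleftrightarrow> l \<in> seqs n m \<and> a \<le> m"
  by (auto simp: seqs_def)

lemma length_seqs: "l \<in> seqs n m \<Longrightarrow> length l = n"
  by (simp add: seqs_def)

lemma nth_seqs_le: "l \<in> seqs n m \<Longrightarrow> i < n \<Longrightarrow> l ! i \<le> m"
  unfolding seqs_def using nth_mem[of i l] by fastforce

lemma last_seqs_le: "l \<in> seqs n m \<Longrightarrow> 0 < n \<Longrightarrow> last l \<le> m"
  unfolding seqs_def using last_in_set[of l] by fastforce

lemma take_in_seqs: "l \<in> seqs n m \<Longrightarrow> k \<le> n \<Longrightarrow> take k l \<in> seqs k m"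
  by (auto simp: seqs_def dest: in_set_takeD)

lemma butlast_in_seqs: "l \<in> seqs n m \<Longrightarrow> butlast l \<in> seqs (n - 1) m"
  by (auto simp: seqs_def dest: in_set_butlastD)

lemma seqs_Suc: "seqs (Suc n) m = (\<lambda>(l, a). l @ [a]) ` (seqs n m \<times> {0..m})"
proof (rule set_eqI, rule iffI)
  fix l assume l: "l \<in> seqs (Suc n) m"
  then have "l = butlast l @ [last l]" by (cases l rule: rev_cases) (auto simp: seqs_def)
  moreover have "butlast l \<in> seqs n m" "last l \<le> m"
    using butlast_in_seqs[OF l] last_seqs_le[OF l] by auto
  ultimately show "l \<in> (\<lambda>(l, a). l @ [a]) ` (seqs n m \<times> {0..m})" by force
qed auto

lemma prefix_decomp:
  assumes "0 < t" "t \<le> length l"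
  shows "last (take t l) = l ! (t - 1)" "butlast (take t l) = take (t - 1) l"
    and "take (t - 1) l @ [l ! (t - 1)] = take t l"
  using assms take_Suc_conv_app_nth[of "t - 1" l]
  by (auto simp: last_conv_nth butlast_take min_def)

lemma sum_mult_fiber:
  fixes f :: "'a \<Rightarrow> real" and g :: "'b \<Rightarrow> real"
  assumes "finite A" "finite V" "\<And>a. a \<in> A \<Longrightarrow> \<phi> a \<in> V"
  shows "(\<Sum>a\<in>A. f a * g (\<phi> a)) = (\<Sum>v\<in>V. (\<Sum>a\<in>A. if \<phi> a = v then f a else 0) * g v)"
proof -
  have "(\<Sum>v\<in>V. (\<Sum>a\<in>A. if \<phi> a = v then f a else 0) * g v)
      = (\<Sum>v\<in>V. \<Sum>a\<in>A. if \<phi> a = v then f a * g v else 0)"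
    by (auto simp: sum_distrib_right intro!: sum.cong)
  also have "\<dots> = (\<Sum>a\<in>A. \<Sum>v\<in>V. if \<phi> a = v then f a * g v else 0)"
    by (rule sum.swap)
  also have "\<dots> = (\<Sum>a\<in>A. f a * g (\<phi> a))"
    using assms by (simp add: sum.delta)
  finally show ?thesis ..
qed

lemma joint_singleton: "joint (Suc 0) Q PX1 PS1 q [s] [x] [y] = PS1 s * PX1 x * q 1 [x] [s] [] y"
  by (simp add: joint_def)

definition state_trans :: "(nat \<Rightarrow> nat \<Rightarrow> real) \<Rightarrow> nat \<Rightarrow> nat \<Rightarrow> nat \<Rightarrow> nat \<Rightarrow> nat \<Rightarrow> real" where
  "state_trans Q s x y s' x' = (if int s' = int s - int x + int y then 1 else 0) * Q x x'"

lemma joint_snoc: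
  assumes "k \<ge> 1" "length ss = k" "length xs = k" "length ys = k"
  shows "joint (Suc k) Q PX1 PS1 q (ss @ [s]) (xs @ [x]) (ys @ [y]) =
    joint k Q PX1 PS1 q ss xs ys * q (Suc k) (xs @ [x]) (ss @ [s]) ys y *
    state_trans Q (last ss) (last xs) (last ys) s x"
proof -
  have last: "ss ! (k - 1) = last ss" "xs ! (k - 1) = last xs" "ys ! (k - 1) = last ys"
    using assms by (simp_all add: last_conv_nth flip: length_greater_0_conv)
  have "(\<Prod>t\<in>{1..k}. q t (take t (xs @ [x])) (take t (ss @ [s])) (take (t - 1) (ys @ [y])) ((ys @ [y]) ! (t - 1)))
      = (\<Prod>t\<in>{1..k}. q t (take t xs) (take t ss) (take (t - 1) ys) (ys ! (t - 1)))"
    using assms by (intro prod.cong) (auto simp: nth_append)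
  moreover have "(\<Prod>t\<in>{2..k}. (if int ((ss @ [s]) ! (t - 1)) = int ((ss @ [s]) ! (t - 2))
        - int ((xs @ [x]) ! (t - 2)) + int ((ys @ [y]) ! (t - 2)) then 1 else 0)
        * Q ((xs @ [x]) ! (t - 2)) ((xs @ [x]) ! (t - 1)))
      = (\<Prod>t\<in>{2..k}. (if int (ss ! (t - 1)) = int (ss ! (t - 2)) - int (xs ! (t - 2)) + int (ys ! (t - 2))
        then 1 else 0) * Q (xs ! (t - 2)) (xs ! (t - 1)))"
    using assms by (intro prod.cong) (auto simp: nth_append)
  ultimately show ?thesis
    using assms last by (simp add: joint_def state_trans_def prod.cl_ivl_Suc nth_append ac_simps)
qed

section \<open>Expectations under the law of the first steps\<close>

locale charging_model =
  fixes mx my ms T :: nat and Q :: "nat \<Rightarrow> nat \<Rightarrow> real" and PX1 PS1 :: "nat \<Rightarrow> real"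
  assumes demand_le_charge: "mx \<le> my" and horizon_pos: "1 \<le> T"
    and stochastic_Q: "stochastic Q mx"
    and pmf_X1: "is_pmf_on PX1 mx" and pmf_S1: "is_pmf_on PS1 ms"
begin

abbreviation admissible :: "policy \<Rightarrow> bool" where
  "admissible q \<equiv> policyA mx my ms T q"

abbreviation prob :: "policy \<Rightarrow> (nat list \<Rightarrow> nat list \<Rightarrow> nat list \<Rightarrow> bool) \<Rightarrow> real" where
  "prob q F \<equiv> prob_ev mx my ms T Q PX1 PS1 q F"

definition traj :: "nat \<Rightarrow> (nat list \<times> nat list \<times> nat list) set" where
  "traj k = seqs k ms \<times> seqs k mx \<times> seqs k my"

text \<open>For an admissible \<open>q\<close> and \<open>1 \<le> k \<le> T\<close>, \<open>joint k\<close> is the law of the first \<open>k\<close> steps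
  (\<open>expect_prefix\<close>), so \<open>expect q k f\<close> is \<open>E[f(S\<^sup>k, X\<^sup>k, Y\<^sup>k)]\<close>.\<close>

definition expect :: "policy \<Rightarrow> nat \<Rightarrow> (nat list \<Rightarrow> nat list \<Rightarrow> nat list \<Rightarrow> real) \<Rightarrow> real" where
  "expect q k f = (\<Sum>(ss, xs, ys)\<in>traj k. f ss xs ys * joint k Q PX1 PS1 q ss xs ys)"

lemma finite_traj [simp]: "finite (traj k)"
  by (simp add: traj_def)

lemma traj_0: "traj 0 = {([], [], [])}"
  by (simp add: traj_def)

lemma length_traj:
  "(ss, xs, ys) \<in> traj k \<Longrightarrow> length ss = k \<and> length xs = k \<and> length ys = k"
  by (auto simp: traj_def length_seqs)

lemma sum_traj:
  "(\<Sum>w\<in>traj k. f w) = (\<Sum>ss\<in>seqs k ms. \<Sum>xs\<in>seqs k mx. \<Sum>ys\<in>seqs k my. f (ss, xs, ys))"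
  unfolding traj_def by (simp add: sum.cartesian_product)

lemma sum_traj_Suc:
  "(\<Sum>w\<in>traj (Suc k). f w) = (\<Sum>(ss, xs, ys)\<in>traj k.
     \<Sum>s\<in>{0..ms}. \<Sum>x\<in>{0..mx}. \<Sum>y\<in>{0..my}. f (ss @ [s], xs @ [x], ys @ [y]))"
proof -
  let ?snoc = "\<lambda>((ss, xs, ys), (s, x, y)). (ss @ [s], xs @ [x], ys @ [y])"
  let ?steps = "{0..ms} \<times> {0..mx} \<times> {0..my}"
  have "traj (Suc k) = ?snoc ` (traj k \<times> ?steps)"
    unfolding traj_def seqs_Suc by (auto simp: image_iff)
  moreover have "inj_on ?snoc (traj k \<times> ?steps)"
    by (auto simp: inj_on_def)
  ultimately show ?thesis
    by (simp add: sum.reindex sum.cartesian_product case_prod_unfold)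
qed

lemma prob_ev_expect: "prob q F = expect q T (\<lambda>ss xs ys. if F ss xs ys then 1 else 0)"
  unfolding prob_ev_def expect_def sum_traj by (auto intro!: sum.cong)

lemma expect_1: "expect q 1 f =
  (\<Sum>s\<in>{0..ms}. \<Sum>x\<in>{0..mx}. \<Sum>y\<in>{0..my}. f [s] [x] [y] * (PS1 s * PX1 x * q 1 [x] [s] [] y))"
  unfolding expect_def One_nat_def sum_traj_Suc traj_0 by (simp add: joint_singleton)

lemma expect_cong:
  "(\<And>ss xs ys. (ss, xs, ys) \<in> traj k \<Longrightarrow> f ss xs ys = g ss xs ys) \<Longrightarrow> expect q k f = expect q k g"
  unfolding expect_def by (auto intro!: sum.cong)

lemma expect_cong_support:
  assumes "\<And>ss xs ys. (ss, xs, ys) \<in> traj k \<Longrightarrow> joint k Q PX1 PS1 q ss xs ys \<noteq> 0 \<Longrightarrow>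
    f ss xs ys = g ss xs ys"
  shows "expect q k f = expect q k g"
  unfolding expect_def using assms by (intro sum.cong) (auto split: prod.split)

lemma expect_cmult: "expect q k (\<lambda>ss xs ys. c * f ss xs ys) = c * expect q k f"
  unfolding expect_def by (simp add: sum_distrib_left case_prod_beta ac_simps)

lemma expect_sum: "expect q k (\<lambda>ss xs ys. \<Sum>i\<in>I. h i ss xs ys) = (\<Sum>i\<in>I. expect q k (h i))"
  unfolding expect_def sum_distrib_right by (subst sum.swap) (simp add: case_prod_unfold)

lemma expect_diff: "expect q k (\<lambda>ss xs ys. f ss xs ys - g ss xs ys) = expect q k f - expect q k g"
  unfolding expect_def by (simp add: case_prod_unfold left_diff_distrib sum_subtractf)

lemma expect_fiber:
  assumes "finite V" and "\<And>ss xs ys. (ss, xs, ys) \<in> traj k \<Longrightarrow> \<phi> ss xs ys \<in> V"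
  shows "expect q k (\<lambda>ss xs ys. f ss xs ys * g (\<phi> ss xs ys))
       = (\<Sum>v\<in>V. expect q k (\<lambda>ss xs ys. f ss xs ys * (if \<phi> ss xs ys = v then 1 else 0)) * g v)"
proof -
  have "expect q k (\<lambda>ss xs ys. f ss xs ys * g (\<phi> ss xs ys))
      = (\<Sum>w\<in>traj k. (case w of (ss, xs, ys) \<Rightarrow> f ss xs ys * joint k Q PX1 PS1 q ss xs ys)
                     * g (case w of (ss, xs, ys) \<Rightarrow> \<phi> ss xs ys))"
    unfolding expect_def by (intro sum.cong refl) (auto simp: ac_simps)
  also have "\<dots> = (\<Sum>v\<in>V. (\<Sum>w\<in>traj k. if (case w of (ss, xs, ys) \<Rightarrow> \<phi> ss xs ys) = v
      then (case w of (ss, xs, ys) \<Rightarrow> f ss xs ys * joint k Q PX1 PS1 q ss xs ys) else 0) * g v)"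
    using assms by (intro sum_mult_fiber) auto
  also have "\<dots> = (\<Sum>v\<in>V. expect q k (\<lambda>ss xs ys. f ss xs ys * (if \<phi> ss xs ys = v then 1 else 0)) * g v)"
    unfolding expect_def by (intro sum.cong refl arg_cong2[where f="(*)"]) auto
  finally show ?thesis .
qed

lemma Q_nonneg: "i \<le> mx \<Longrightarrow> j \<le> mx \<Longrightarrow> 0 \<le> Q i j"
  using stochastic_Q by (auto simp: stochastic_def)

lemma sum_Q: "i \<le> mx \<Longrightarrow> (\<Sum>j\<in>{0..mx}. Q i j) = 1"
  using stochastic_Q by (auto simp: stochastic_def)

lemma PX1_nonneg: "i \<le> mx \<Longrightarrow> 0 \<le> PX1 i"
  using pmf_X1 by (auto simp: is_pmf_on_def)

lemma PS1_nonneg: "i \<le> ms \<Longrightarrow> 0 \<le> PS1 i"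
  using pmf_S1 by (auto simp: is_pmf_on_def)

lemma sum_PX1: "(\<Sum>i\<in>{0..mx}. PX1 i) = 1"
  using pmf_X1 by (auto simp: is_pmf_on_def)

lemma sum_PS1: "(\<Sum>i\<in>{0..ms}. PS1 i) = 1"
  using pmf_S1 by (auto simp: is_pmf_on_def)

lemma admissibleD:
  assumes "admissible q" "1 \<le> t" "t \<le> T"
    and "xs \<in> seqs t mx" "ss \<in> seqs t ms" "ys \<in> seqs (t - 1) my"
  shows admissible_nonneg: "y \<le> my \<Longrightarrow> 0 \<le> q t xs ss ys y"
    and admissible_sum: "(\<Sum>y\<in>{0..my}. q t xs ss ys y) = 1"
    and admissible_sum_feasible: "(\<Sum>y\<in>{y\<in>{0..my}. int (last ss) - int (last xs) + int y \<in> {0..int ms}}.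
           q t xs ss ys y) = 1"
  using assms unfolding policyA_def by auto

lemma admissible_infeasible:
  assumes "admissible q" "1 \<le> t" "t \<le> T"
    and h: "xs \<in> seqs t mx" "ss \<in> seqs t ms" "ys \<in> seqs (t - 1) my"
    and "y \<le> my" and "int (last ss) - int (last xs) + int y \<notin> {0..int ms}"
  shows "q t xs ss ys y = 0"
proof -
  let ?F = "{y\<in>{0..my}. int (last ss) - int (last xs) + int y \<in> {0..int ms}}"
  have "(\<Sum>y\<in>{0..my}. q t xs ss ys y) = (\<Sum>y\<in>{0..my} - ?F. q t xs ss ys y) + (\<Sum>y\<in>?F. q t xs ss ys y)"
    by (rule sum.subset_diff) auto
  then have "(\<Sum>y\<in>{0..my} - ?F. q t xs ss ys y) = 0"
    using admissibleD[OF assms(1-3) h] by simp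
  moreover have "\<forall>z\<in>{0..my} - ?F. 0 \<le> q t xs ss ys z"
    using admissibleD[OF assms(1-3) h] by simp
  ultimately show ?thesis
    using assms(7,8) by (subst (asm) sum_nonneg_eq_0_iff) auto
qed

lemma joint_nonneg:
  assumes "admissible q" "1 \<le> k" "k \<le> T" "(ss, xs, ys) \<in> traj k"
  shows "0 \<le> joint k Q PX1 PS1 q ss xs ys"
  unfolding joint_def using assms
  by (auto intro!: mult_nonneg_nonneg prod_nonneg PS1_nonneg PX1_nonneg Q_nonneg
      admissible_nonneg[OF assms(1)] take_in_seqs nth_seqs_le simp: traj_def)

lemma joint_battery_feasible:
  assumes q: "admissible q" and k: "1 \<le> k" "k \<le> T" and w: "(ss, xs, ys) \<in> traj k"
    and "joint k Q PX1 PS1 q ss xs ys \<noteq> 0"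
  shows "int (last ss) - int (last xs) + int (last ys) \<in> {0..int ms}"
proof (rule ccontr)
  assume infeasible: "\<not> ?thesis"
  have l: "length ss = k" "length xs = k" "length ys = k"
    using length_traj[OF w] by auto
  have "q k (take k xs) (take k ss) (take (k - 1) ys) (ys ! (k - 1)) \<noteq> 0"
    using assms(5) k unfolding joint_def by auto
  moreover have "ys ! (k - 1) = last ys"
    using l k by (simp add: last_conv_nth flip: length_greater_0_conv)
  moreover have "q k xs ss (take (k - 1) ys) (last ys) = 0"
    using w k infeasible
    by (intro admissible_infeasible[OF q]) (auto simp: traj_def take_in_seqs last_seqs_le)
  ultimately show False using l by simp
qed

lemma joint_sum_next_battery:
  assumes "admissible q" "1 \<le> k" "k \<le> T" "(ss, xs, ys) \<in> traj k"
  shows "joint k Q PX1 PS1 q ss xs ys *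
      (\<Sum>s\<in>{0..ms}. if int s = int (last ss) - int (last xs) + int (last ys) then 1 else 0)
    = joint k Q PX1 PS1 q ss xs ys"
proof (cases "joint k Q PX1 PS1 q ss xs ys = 0")
  case False
  let ?v = "int (last ss) - int (last xs) + int (last ys)"
  have "?v \<in> {0..int ms}"
    using joint_battery_feasible[OF assms False] .
  then have "(\<Sum>s\<in>{0..ms}. if int s = ?v then 1 else 0) = (\<Sum>s\<in>{0..ms}. if s = nat ?v then 1 else (0::real))"
    by (intro sum.cong) auto
  also have "\<dots> = 1"
    using \<open>?v \<in> {0..int ms}\<close> by (simp add: nat_le_iff)
  finally show ?thesis by simp
qed simp

lemma expect_Suc_factor:
  assumes q: "admissible q" and k: "1 \<le> k" "k < T"
    and F: "\<And>ss xs ys s x y. (ss, xs, ys) \<in> traj k \<Longrightarrow> s \<le> ms \<Longrightarrow> x \<le> mx \<Longrightarrow> y \<le> my \<Longrightarrow>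
               F (ss @ [s]) (xs @ [x]) (ys @ [y]) = G ss xs ys * H x"
  shows "expect q (Suc k) F = expect q k (\<lambda>ss xs ys. G ss xs ys * (\<Sum>x\<in>{0..mx}. Q (last xs) x * H x))"
  unfolding expect_def sum_traj_Suc
proof (intro sum.cong refl, clarify)
  fix ss xs ys assume w: "(ss, xs, ys) \<in> traj k"
  define J where "J = joint k Q PX1 PS1 q ss xs ys"
  define ind where "ind = (\<lambda>s::nat. if int s = int (last ss) - int (last xs) + int (last ys) then 1 else (0::real))"
  have trans: "state_trans Q (last ss) (last xs) (last ys) s x = ind s * Q (last xs) x" for s x
    by (simp add: state_trans_def ind_def)
  have "(\<Sum>s\<in>{0..ms}. \<Sum>x\<in>{0..mx}. \<Sum>y\<in>{0..my}.
          F (ss @ [s]) (xs @ [x]) (ys @ [y]) * joint (Suc k) Q PX1 PS1 q (ss @ [s]) (xs @ [x]) (ys @ [y]))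
      = (\<Sum>s\<in>{0..ms}. \<Sum>x\<in>{0..mx}. G ss xs ys * H x * J * ind s * Q (last xs) x *
          (\<Sum>y\<in>{0..my}. q (Suc k) (xs @ [x]) (ss @ [s]) ys y))"
    using w k length_traj[OF w]
    by (simp add: F joint_snoc trans J_def sum_distrib_left ac_simps)
  also have "\<dots> = (\<Sum>s\<in>{0..ms}. \<Sum>x\<in>{0..mx}. G ss xs ys * J * (ind s * (Q (last xs) x * H x)))"
    using w k by (intro sum.cong refl) (simp add: admissible_sum[OF q] traj_def)
  also have "\<dots> = G ss xs ys * J * ((\<Sum>s\<in>{0..ms}. ind s) * (\<Sum>x\<in>{0..mx}. Q (last xs) x * H x))"
    by (subst sum_product) (simp only: sum_distrib_left)
  also have "\<dots> = G ss xs ys * (\<Sum>x\<in>{0..mx}. Q (last xs) x * H x) * (J * (\<Sum>s\<in>{0..ms}. ind s))"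
    by (simp only: ac_simps)
  also have "J * (\<Sum>s\<in>{0..ms}. ind s) = J"
    unfolding J_def ind_def using joint_sum_next_battery[OF q k(1) _ w] k by simp
  finally show "(\<Sum>s\<in>{0..ms}. \<Sum>x\<in>{0..mx}. \<Sum>y\<in>{0..my}.
          F (ss @ [s]) (xs @ [x]) (ys @ [y]) * joint (Suc k) Q PX1 PS1 q (ss @ [s]) (xs @ [x]) (ys @ [y]))
      = G ss xs ys * (\<Sum>x\<in>{0..mx}. Q (last xs) x * H x) * J"
    by simp
qed

lemma expect_prefix:
  assumes q: "admissible q" and k: "1 \<le> k" "k \<le> j" "j \<le> T"
  shows "expect q j (\<lambda>ss xs ys. f (take k ss) (take k xs) (take k ys)) = expect q k f"
  using k(2,3)
proof (induction j rule: dec_induct)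
  case base
  show ?case by (rule expect_cong) (simp add: length_traj)
next
  case (step j)
  have "expect q (Suc j) (\<lambda>ss xs ys. f (take k ss) (take k xs) (take k ys))
     = expect q j (\<lambda>ss xs ys. f (take k ss) (take k xs) (take k ys) * (\<Sum>x\<in>{0..mx}. Q (last xs) x * 1))"
    using step k by (intro expect_Suc_factor[OF q]) (auto simp: length_traj)
  also have "\<dots> = expect q j (\<lambda>ss xs ys. f (take k ss) (take k xs) (take k ys))"
    using step k by (intro expect_cong) (auto simp: traj_def sum_Q last_seqs_le)
  finally show ?case using step by simp
qed

lemma expect_one:
  assumes q: "admissible q" and k: "1 \<le> k" "k \<le> T"
  shows "expect q k (\<lambda>_ _ _. 1) = 1"
proof -
  have "expect q 1 (\<lambda>_ _ _. 1) = (\<Sum>s\<in>{0..ms}. \<Sum>x\<in>{0..mx}. PS1 s * PX1 x * (\<Sum>y\<in>{0..my}. q 1 [x] [s] [] y))"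
    unfolding expect_1 by (simp add: sum_distrib_left)
  also have "\<dots> = 1"
    using horizon_pos by (simp add: admissible_sum[OF q] seqs_def sum_PX1 sum_PS1
        flip: sum_distrib_left sum_distrib_right)
  finally show ?thesis
    using expect_prefix[OF q order_refl k, of "\<lambda>_ _ _. 1"] by simp
qed

lemma expect_nonneg:
  assumes "admissible q" "1 \<le> k" "k \<le> T" "\<And>ss xs ys. (ss, xs, ys) \<in> traj k \<Longrightarrow> 0 \<le> f ss xs ys"
  shows "0 \<le> expect q k f"
  unfolding expect_def using assms joint_nonneg[OF assms(1-3)] by (intro sum_nonneg) auto

lemma expect_mono_support:
  assumes "admissible q" "1 \<le> k" "k \<le> T"
    and "\<And>ss xs ys. (ss, xs, ys) \<in> traj k \<Longrightarrow> joint k Q PX1 PS1 q ss xs ys \<noteq> 0 \<Longrightarrow>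
           f ss xs ys \<le> g ss xs ys"
  shows "expect q k f \<le> expect q k g"
  unfolding expect_def using assms joint_nonneg[OF assms(1-3)]
  by (intro sum_mono) (force intro: mult_right_mono)

lemma prob_nonneg: "admissible q \<Longrightarrow> 0 \<le> prob q F"
  unfolding prob_ev_expect using horizon_pos by (intro expect_nonneg) auto

lemma joint_le_prob:
  assumes "admissible q" "(ss, xs, ys) \<in> traj T" "F ss xs ys"
  shows "joint T Q PX1 PS1 q ss xs ys \<le> prob q F"
proof -
  have "(\<lambda>(ss, xs, ys). (if F ss xs ys then 1 else 0) * joint T Q PX1 PS1 q ss xs ys) (ss, xs, ys) \<le> prob q F"
    unfolding prob_ev_expect expect_def using assms joint_nonneg[OF assms(1) horizon_pos order_refl]
    by (intro member_le_sum) auto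
  then show ?thesis using assms by simp
qed

section \<open>Marginals and the reduced policy\<close>

definition prob_state_out :: "policy \<Rightarrow> nat \<Rightarrow> nat \<Rightarrow> nat \<Rightarrow> nat list \<Rightarrow> real" where
  "prob_state_out q t x s c = prob q (\<lambda>ss xs ys. xs ! (t - 1) = x \<and> ss ! (t - 1) = s \<and> take t ys = c)"

text \<open>\<open>prob_state_hist q t x s c\<close> is \<open>P(X\<^sub>t = x, S\<^sub>t = s, Y\<^sup>t\<^sup>-\<^sup>1 = c)\<close>, written through the
  time-\<open>(t-1)\<close> marginal so that it visibly depends on \<open>q\<close> only through that marginal.\<close>

definition prob_state_hist :: "policy \<Rightarrow> nat \<Rightarrow> nat \<Rightarrow> nat \<Rightarrow> nat list \<Rightarrow> real" where
  "prob_state_hist q t x' s' c = (if t = 1 then PS1 s' * PX1 x' else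
     (\<Sum>x\<in>{0..mx}. \<Sum>s\<in>{0..ms}. prob_state_out q (t - 1) x s c * state_trans Q s x (last c) s' x'))"

lemma prob_state_out_nonneg: "admissible q \<Longrightarrow> 0 \<le> prob_state_out q t x s c"
  unfolding prob_state_out_def by (rule prob_nonneg)

lemma prob_state_out_expect:
  assumes q: "admissible q" and t: "1 \<le> t" "t \<le> T" and c: "length c = t"
  shows "prob_state_out q t x s c = expect q t (\<lambda>ss xs ys. if last xs = x \<and> last ss = s \<and> ys = c then 1 else 0)"
proof -
  have "prob_state_out q t x s c = expect q T (\<lambda>ss xs ys.
      (\<lambda>ss xs ys. if last xs = x \<and> last ss = s \<and> ys = c then 1 else 0) (take t ss) (take t xs) (take t ys))"
    unfolding prob_state_out_def prob_ev_expect using t c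
    by (intro expect_cong) (auto simp: length_traj prefix_decomp)
  also have "\<dots> = expect q t (\<lambda>ss xs ys. if last xs = x \<and> last ss = s \<and> ys = c then 1 else 0)"
    using t by (intro expect_prefix[OF q]) auto
  finally show ?thesis .
qed

lemma prob_state_out_1:
  assumes q: "admissible q" and "x \<le> mx" "s \<le> ms" "y \<le> my"
  shows "prob_state_out q 1 x s [y] = PS1 s * PX1 x * q 1 [x] [s] [] y"
proof -
  have "prob_state_out q 1 x s [y] = expect q 1 (\<lambda>ss xs ys. if last xs = x \<and> last ss = s \<and> ys = [y] then 1 else 0)"
    by (rule prob_state_out_expect[OF q order_refl horizon_pos]) simp
  also have "\<dots> = (\<Sum>s'\<in>{0..ms}. \<Sum>x'\<in>{0..mx}. \<Sum>y'\<in>{0..my}.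
      if y' = y then if x' = x then if s' = s then PS1 s * PX1 x * q 1 [x] [s] [] y else 0 else 0 else 0)"
    unfolding expect_1 by (intro sum.cong) auto
  finally show ?thesis using assms by simp
qed

lemma prob_state_out_Suc:
  assumes q: "admissible q" and k: "1 \<le> k" "k < T"
    and "x' \<le> mx" "s' \<le> ms" "y \<le> my" and c: "length c = k"
  shows "prob_state_out q (Suc k) x' s' (c @ [y]) = expect q k (\<lambda>ss xs ys.
     (if ys = c then 1 else 0) * q (Suc k) (xs @ [x']) (ss @ [s']) c y * state_trans Q (last ss) (last xs) (last c) s' x')"
    (is "_ = ?rhs")
proof -
  have "prob_state_out q (Suc k) x' s' (c @ [y]) =
      expect q (Suc k) (\<lambda>ss xs ys. if last xs = x' \<and> last ss = s' \<and> ys = c @ [y] then 1 else 0)"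
    using k c by (intro prob_state_out_expect[OF q]) auto
  also have "\<dots> = ?rhs"
    unfolding expect_def sum_traj_Suc
  proof (intro sum.cong refl, clarify)
    fix ss xs ys assume w: "(ss, xs, ys) \<in> traj k"
    have "(\<Sum>s\<in>{0..ms}. \<Sum>x\<in>{0..mx}. \<Sum>y'\<in>{0..my}.
        (if last (xs @ [x]) = x' \<and> last (ss @ [s]) = s' \<and> ys @ [y'] = c @ [y] then 1 else 0)
          * joint (Suc k) Q PX1 PS1 q (ss @ [s]) (xs @ [x]) (ys @ [y']))
      = (\<Sum>s\<in>{0..ms}. \<Sum>x\<in>{0..mx}. \<Sum>y'\<in>{0..my}. if y' = y then if x = x' then if s = s' then
          (if ys = c then 1 else 0) * joint (Suc k) Q PX1 PS1 q (ss @ [s']) (xs @ [x']) (ys @ [y]) else 0 else 0 else 0)"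
      by (intro sum.cong) auto
    also have "\<dots> = (if ys = c then 1 else 0) * q (Suc k) (xs @ [x']) (ss @ [s']) c y *
        state_trans Q (last ss) (last xs) (last c) s' x' * joint k Q PX1 PS1 q ss xs ys"
      using assms length_traj[OF w] by (auto simp: joint_snoc)
    finally show "(\<Sum>s\<in>{0..ms}. \<Sum>x\<in>{0..mx}. \<Sum>y'\<in>{0..my}.
        (if last (xs @ [x]) = x' \<and> last (ss @ [s]) = s' \<and> ys @ [y'] = c @ [y] then 1 else 0)
          * joint (Suc k) Q PX1 PS1 q (ss @ [s]) (xs @ [x]) (ys @ [y']))
      = (if ys = c then 1 else 0) * q (Suc k) (xs @ [x']) (ss @ [s']) c y *
        state_trans Q (last ss) (last xs) (last c) s' x' * joint k Q PX1 PS1 q ss xs ys" .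
  qed
  finally show ?thesis .
qed

lemma expect_state_trans:
  assumes q: "admissible q" and k: "1 \<le> k" "k < T" and c: "length c = k"
  shows "expect q k (\<lambda>ss xs ys. (if ys = c then 1 else 0) * state_trans Q (last ss) (last xs) (last c) s' x')
     = prob_state_hist q (Suc k) x' s' c"
proof -
  let ?g = "\<lambda>(x, s). state_trans Q s x (last c) s' x'"
  have "expect q k (\<lambda>ss xs ys. (if ys = c then 1 else 0) * ?g (last xs, last ss))
      = (\<Sum>v\<in>{0..mx} \<times> {0..ms}. expect q k (\<lambda>ss xs ys. (if ys = c then 1 else 0) *
          (if (last xs, last ss) = v then 1 else 0)) * ?g v)"
    using k by (intro expect_fiber) (auto simp: traj_def last_seqs_le)
  also have "\<dots> = (\<Sum>x\<in>{0..mx}. \<Sum>s\<in>{0..ms}. prob_state_out q k x s c * ?g (x, s))"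
    unfolding sum.cartesian_product using k c
    by (auto simp: prob_state_out_expect[OF q] intro!: sum.cong arg_cong2[where f="(*)"] expect_cong)
  finally show ?thesis
    using k by (simp add: prob_state_hist_def)
qed

lemma sum_prob_state_out:
  assumes q: "admissible q" and t: "1 \<le> t" "t \<le> T" and "x' \<le> mx" "s' \<le> ms"
    and c: "c \<in> seqs (t - 1) my"
  shows "(\<Sum>y\<in>{0..my}. prob_state_out q t x' s' (c @ [y])) = prob_state_hist q t x' s' c"
proof (cases "t = 1")
  case True
  then have "c = []" using c by simp
  have "(\<Sum>y\<in>{0..my}. prob_state_out q 1 x' s' [y]) = (\<Sum>y\<in>{0..my}. PS1 s' * PX1 x' * q 1 [x'] [s'] [] y)"
    using assms by (intro sum.cong refl prob_state_out_1[OF q]) auto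
  also have "\<dots> = PS1 s' * PX1 x' * (\<Sum>y\<in>{0..my}. q 1 [x'] [s'] [] y)"
    by (simp add: sum_distrib_left)
  also have "\<dots> = PS1 s' * PX1 x'"
    using assms horizon_pos by (simp add: admissible_sum seqs_def)
  finally show ?thesis
    using True \<open>c = []\<close> by (simp add: prob_state_hist_def)
next
  case False
  then obtain k where tk: "t = Suc k" and k: "1 \<le> k" "k < T" using t by (cases t) auto
  have lc: "length c = k" using c tk by (simp add: length_seqs)
  have "(\<Sum>y\<in>{0..my}. prob_state_out q t x' s' (c @ [y])) = expect q k (\<lambda>ss xs ys.
      (if ys = c then 1 else 0) * (\<Sum>y\<in>{0..my}. q (Suc k) (xs @ [x']) (ss @ [s']) c y) *
      state_trans Q (last ss) (last xs) (last c) s' x')"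
    unfolding tk using assms k lc
    by (simp add: prob_state_out_Suc[OF q] sum_distrib_left sum_distrib_right flip: expect_sum)
  also have "\<dots> = expect q k (\<lambda>ss xs ys. (if ys = c then 1 else 0) * state_trans Q (last ss) (last xs) (last c) s' x')"
    using assms k tk c by (intro expect_cong) (auto simp: traj_def admissible_sum[OF q])
  finally show ?thesis
    unfolding tk using expect_state_trans[OF q k lc] by simp
qed

lemma prob_state_out_policyB:
  assumes q: "admissible (embedB r)" and t: "1 \<le> t" "t \<le> T" and "x' \<le> mx" "s' \<le> ms" "y \<le> my"
    and c: "c \<in> seqs (t - 1) my"
  shows "prob_state_out (embedB r) t x' s' (c @ [y]) = r t x' s' c y * prob_state_hist (embedB r) t x' s' c"
proof (cases "t = 1")
  case True
  then have "c = []" using c by simp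
  have "prob_state_out (embedB r) 1 x' s' [y] = r 1 x' s' [] y * (PS1 s' * PX1 x')"
    using prob_state_out_1[OF q] assms by (simp add: embedB_def)
  then show ?thesis
    using True \<open>c = []\<close> by (simp add: prob_state_hist_def)
next
  case False
  then obtain k where tk: "t = Suc k" and k: "1 \<le> k" "k < T" using t by (cases t) auto
  have lc: "length c = k" using c tk by (simp add: length_seqs)
  have "prob_state_out (embedB r) t x' s' (c @ [y]) = expect (embedB r) k (\<lambda>ss xs ys.
      r t x' s' c y * ((if ys = c then 1 else 0) * state_trans Q (last ss) (last xs) (last c) s' x'))"
    unfolding tk using assms prob_state_out_Suc[OF q k _ _ _ lc] by (simp add: embedB_def ac_simps)
  then show ?thesis
    unfolding expect_cmult tk using expect_state_trans[OF q k lc] by simp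
qed

lemma prob_state_out_infeasible:
  assumes q: "admissible q" and t: "1 \<le> t" "t \<le> T" and c: "length c = t - 1"
    and infeasible: "int s - int x + int y \<notin> {0..int ms}"
  shows "prob_state_out q t x s (c @ [y]) = 0"
proof -
  have "expect q t (\<lambda>ss xs ys. if last xs = x \<and> last ss = s \<and> ys = c @ [y] then 1 else 0) = 0"
    unfolding expect_def
  proof (intro sum.neutral ballI, clarify)
    fix ss xs ys assume w: "(ss, xs, ys) \<in> traj t"
    show "(if last xs = x \<and> last ss = s \<and> ys = c @ [y] then 1 else 0) * joint t Q PX1 PS1 q ss xs ys = 0"
      using joint_battery_feasible[OF q t w] infeasible
      by (cases "joint t Q PX1 PS1 q ss xs ys = 0") auto
  qed
  then show ?thesis
    using prob_state_out_expect[OF q t] c t by simp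
qed

text \<open>Off the support
  of \<open>(X\<^sub>t, S\<^sub>t, Y\<^sup>t\<^sup>-\<^sup>1)\<close> it charges \<open>y = x\<close>, which keeps the
  battery level and is available because \<open>mx \<le> my\<close>.\<close>

definition reduced_policy :: "policy \<Rightarrow> policyB" where
  "reduced_policy q t x s c y =
     (if (\<Sum>y'\<in>{0..my}. prob_state_out q t x s (c @ [y'])) = 0 then (if y = x then 1 else 0)
      else prob_state_out q t x s (c @ [y]) / (\<Sum>y'\<in>{0..my}. prob_state_out q t x s (c @ [y'])))"

lemma sum_prob_state_out_feasible:
  assumes "admissible q" "1 \<le> t" "t \<le> T" "length c = t - 1"
  shows "(\<Sum>y\<in>{y\<in>{0..my}. int s - int x + int y \<in> {0..int ms}}. prob_state_out q t x s (c @ [y]))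
       = (\<Sum>y\<in>{0..my}. prob_state_out q t x s (c @ [y]))"
  using assms by (intro sum.mono_neutral_left) (auto intro: prob_state_out_infeasible)

lemma admissible_reduced_policy:
  assumes q: "admissible q"
  shows "admissible (embedB (reduced_policy q))"
  unfolding policyA_def
proof (intro ballI)
  fix t xs ss ys assume t: "t \<in> {1..T}" and h: "xs \<in> seqs t mx" "ss \<in> seqs t ms" "ys \<in> seqs (t - 1) my"
  define x where "x = last xs"
  define s where "s = last ss"
  define D where "D = (\<Sum>y\<in>{0..my}. prob_state_out q t x s (ys @ [y]))"
  let ?F = "{y\<in>{0..my}. int s - int x + int y \<in> {0..int ms}}"
  have "x \<le> mx" "s \<le> ms"
    using h t by (auto simp: x_def s_def last_seqs_le)
  then have "x \<in> ?F"
    using demand_le_charge by auto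
  have r: "embedB (reduced_policy q) t xs ss ys y =
      (if D = 0 then (if y = x then 1 else 0) else prob_state_out q t x s (ys @ [y]) / D)" for y
    by (simp add: embedB_def reduced_policy_def D_def x_def s_def)
  have "0 \<le> D"
    unfolding D_def by (intro sum_nonneg prob_state_out_nonneg[OF q])
  have feasible: "(\<Sum>y\<in>?F. prob_state_out q t x s (ys @ [y])) = D"
    unfolding D_def using t h by (intro sum_prob_state_out_feasible[OF q]) (auto simp: length_seqs)
  have "\<forall>y\<in>{0..my}. 0 \<le> embedB (reduced_policy q) t xs ss ys y"
    using \<open>0 \<le> D\<close> by (simp add: r prob_state_out_nonneg[OF q])
  moreover have "(\<Sum>y\<in>{0..my}. embedB (reduced_policy q) t xs ss ys y) = 1"
    using \<open>x \<le> mx\<close> demand_le_charge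
    by (cases "D = 0") (simp_all add: r flip: sum_divide_distrib D_def)
  moreover have "(\<Sum>y\<in>?F. embedB (reduced_policy q) t xs ss ys y) = 1"
  proof (cases "D = 0")
    case True
    then show ?thesis using \<open>x \<in> ?F\<close> by (simp add: r sum.delta)
  next
    case False
    then show ?thesis using feasible by (simp add: r flip: sum_divide_distrib)
  qed
  ultimately show "(\<forall>y\<in>{0..my}. 0 \<le> embedB (reduced_policy q) t xs ss ys y) \<and>
      (\<Sum>y\<in>{0..my}. embedB (reduced_policy q) t xs ss ys y) = 1 \<and>
      (\<Sum>y\<in>{y\<in>{0..my}. int (last ss) - int (last xs) + int y \<in> {0..int ms}}.
          embedB (reduced_policy q) t xs ss ys y) = 1"
    by (simp add: x_def s_def)
qed

lemma prob_state_out_reduced_policy: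
  assumes q: "admissible q"
  shows "1 \<le> t \<Longrightarrow> t \<le> T \<Longrightarrow> x \<le> mx \<Longrightarrow> s \<le> ms \<Longrightarrow> c \<in> seqs t my \<Longrightarrow>
    prob_state_out (embedB (reduced_policy q)) t x s c = prob_state_out q t x s c"
proof (induction t arbitrary: x s c)
  case 0
  then show ?case by simp
next
  case (Suc t)
  let ?r = "reduced_policy q"
  obtain c0 y where c: "c = c0 @ [y]" and c0: "c0 \<in> seqs (Suc t - 1) my" and "y \<le> my"
    using Suc.prems(5) unfolding seqs_Suc by auto
  define D where "D = (\<Sum>y'\<in>{0..my}. prob_state_out q (Suc t) x s (c0 @ [y']))"
  have "prob_state_hist (embedB ?r) (Suc t) x s c0 = prob_state_hist q (Suc t) x s c0"
    unfolding prob_state_hist_def using Suc c0 by (auto intro!: sum.cong)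
  also have "\<dots> = D"
    unfolding D_def using Suc.prems c0 by (intro sum_prob_state_out[OF q, symmetric]) auto
  finally have hist: "prob_state_hist (embedB ?r) (Suc t) x s c0 = D" .
  have "prob_state_out (embedB ?r) (Suc t) x s c = ?r (Suc t) x s c0 y * D"
    unfolding c hist[symmetric] using Suc.prems c0 \<open>y \<le> my\<close>
    by (intro prob_state_out_policyB[OF admissible_reduced_policy[OF q]]) auto
  also have "\<dots> = prob_state_out q (Suc t) x s c"
  proof (cases "D = 0")
    case True
    have "prob_state_out q (Suc t) x s c \<le> D"
      unfolding D_def c using \<open>y \<le> my\<close> by (intro member_le_sum prob_state_out_nonneg[OF q]) auto
    then show ?thesis
      using True prob_state_out_nonneg[OF q, of "Suc t" x s c] by simp
  next
    case False
    then show ?thesis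
      unfolding reduced_policy_def D_def[symmetric] c by simp
  qed
  finally show ?case .
qed

lemma prob_out_hist_eq_sum:
  assumes q: "admissible q" and k: "1 \<le> k" "k \<le> T"
  shows "prob q (\<lambda>ss xs ys. take k ys = c) = (\<Sum>x\<in>{0..mx}. \<Sum>s\<in>{0..ms}. prob_state_out q k x s c)"
proof -
  have "prob q (\<lambda>ss xs ys. take k ys = c)
      = expect q T (\<lambda>ss xs ys. (if take k ys = c then 1 else 0) * (\<lambda>v. 1) (xs ! (k - 1), ss ! (k - 1)))"
    unfolding prob_ev_expect by simp
  also have "\<dots> = (\<Sum>v\<in>{0..mx} \<times> {0..ms}. expect q T (\<lambda>ss xs ys. (if take k ys = c then 1 else 0)
      * (if (xs ! (k - 1), ss ! (k - 1)) = v then 1 else 0)) * 1)"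
    using k by (intro expect_fiber) (auto simp: traj_def intro: nth_seqs_le)
  also have "\<dots> = (\<Sum>x\<in>{0..mx}. \<Sum>s\<in>{0..ms}. prob_state_out q k x s c)"
    unfolding sum.cartesian_product prob_state_out_def prob_ev_expect
    by (auto intro!: sum.cong expect_cong)
  finally show ?thesis .
qed

lemma prob_out_hist_reduced_policy:
  assumes q: "admissible q" and k: "k \<le> T" and c: "c \<in> seqs k my"
  shows "prob (embedB (reduced_policy q)) (\<lambda>ss xs ys. take k ys = c) = prob q (\<lambda>ss xs ys. take k ys = c)"
proof (cases "k = 0")
  case True
  have "prob q' (\<lambda>ss xs ys. take k ys = c) = 1" if "admissible q'" for q'
    using expect_one[OF that horizon_pos order_refl] True c
    by (simp add: prob_ev_expect)
  then show ?thesis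
    using q admissible_reduced_policy[OF q] by simp
next
  case False
  then show ?thesis
    using k c prob_state_out_reduced_policy[OF q]
    by (simp add: prob_out_hist_eq_sum[OF q] prob_out_hist_eq_sum[OF admissible_reduced_policy[OF q]])
qed

section \<open>Chain rule for the leakage\<close>

definition step_kernel :: "policy \<Rightarrow> nat \<Rightarrow> nat list \<Rightarrow> nat list \<Rightarrow> nat list \<Rightarrow> real" where
  "step_kernel q t ss xs ys = q t (take t xs) (take t ss) (take (t - 1) ys) (ys ! (t - 1))"

definition out_cond_prob :: "policy \<Rightarrow> nat \<Rightarrow> nat list \<Rightarrow> real" where
  "out_cond_prob q t ys = prob q (\<lambda>ss' xs' ys'. take t ys' = take t ys)
     / prob q (\<lambda>ss' xs' ys'. take (t - 1) ys' = take (t - 1) ys)"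

definition demand_prob :: "nat \<Rightarrow> nat list \<Rightarrow> real" where
  "demand_prob k xs = PX1 (xs ! 0) * (\<Prod>t\<in>{2..k}. Q (xs ! (t - 2)) (xs ! (t - 1)))"

lemma demand_prob_snoc:
  assumes "1 \<le> k" "length xs = k"
  shows "demand_prob (Suc k) (xs @ [x]) = demand_prob k xs * Q (last xs) x"
proof -
  have "(\<Prod>t\<in>{2..k}. Q ((xs @ [x]) ! (t - 2)) ((xs @ [x]) ! (t - 1))) = (\<Prod>t\<in>{2..k}. Q (xs ! (t - 2)) (xs ! (t - 1)))"
    using assms by (intro prod.cong) (auto simp: nth_append)
  moreover have "xs ! (k - 1) = last xs"
    using assms by (simp add: last_conv_nth flip: length_greater_0_conv)
  ultimately show ?thesis
    using assms by (simp add: demand_prob_def prod.cl_ivl_Suc nth_append ac_simps)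
qed

lemma joint_support:
  assumes "joint k Q PX1 PS1 q ss xs ys \<noteq> 0"
  shows joint_support_battery:
      "\<forall>t\<in>{2..k}. int (ss ! (t - 1)) = int (ss ! (t - 2)) - int (xs ! (t - 2)) + int (ys ! (t - 2))"
    and joint_support_eq:
      "joint k Q PX1 PS1 q ss xs ys = PS1 (ss ! 0) * demand_prob k xs * (\<Prod>t\<in>{1..k}. step_kernel q t ss xs ys)"
proof -
  let ?battery = "\<lambda>t. int (ss ! (t - 1)) = int (ss ! (t - 2)) - int (xs ! (t - 2)) + int (ys ! (t - 2))"
  have "(\<Prod>t\<in>{2..k}. (if ?battery t then 1 else 0) * Q (xs ! (t - 2)) (xs ! (t - 1))) \<noteq> (0::real)"
    using assms unfolding joint_def by auto
  then show battery: "\<forall>t\<in>{2..k}. ?battery t"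
    by (auto simp: prod_zero_iff split: if_splits)
  have "(\<Prod>t\<in>{2..k}. (if ?battery t then 1 else 0) * Q (xs ! (t - 2)) (xs ! (t - 1)))
      = (\<Prod>t\<in>{2..k}. Q (xs ! (t - 2)) (xs ! (t - 1)))"
    using battery by (intro prod.cong) auto
  then show "joint k Q PX1 PS1 q ss xs ys = PS1 (ss ! 0) * demand_prob k xs * (\<Prod>t\<in>{1..k}. step_kernel q t ss xs ys)"
    unfolding joint_def demand_prob_def step_kernel_def by (simp add: ac_simps)
qed

lemma step_kernel_pos:
  assumes q: "admissible q" and k: "1 \<le> k" "k \<le> T" and w: "(ss, xs, ys) \<in> traj k"
    and "joint k Q PX1 PS1 q ss xs ys \<noteq> 0" and t: "t \<in> {1..k}"
  shows "0 < step_kernel q t ss xs ys"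
proof -
  have "step_kernel q t ss xs ys \<noteq> 0"
    using assms(5) joint_support_eq[OF assms(5)] t by auto
  moreover have "0 \<le> step_kernel q t ss xs ys"
    unfolding step_kernel_def using t k w
    by (intro admissible_nonneg[OF q]) (auto simp: traj_def take_in_seqs nth_seqs_le)
  ultimately show ?thesis by simp
qed

lemma battery_determined:
  assumes w: "(ss, xs, ys) \<in> traj T" "(ss', xs, ys) \<in> traj T"
    and nz: "joint T Q PX1 PS1 q ss xs ys \<noteq> 0" "joint T Q PX1 PS1 q ss' xs ys \<noteq> 0"
    and "ss ! 0 = ss' ! 0"
  shows "ss = ss'"
proof (rule nth_equalityI)
  show "length ss = length ss'"
    using length_traj[OF w(1)] length_traj[OF w(2)] by simp
  have "i < T \<longrightarrow> ss ! i = ss' ! i" for i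
  proof (induction i)
    case (Suc i)
    then show ?case
      using joint_support_battery[OF nz(1), rule_format, of "Suc (Suc i)"]
        joint_support_battery[OF nz(2), rule_format, of "Suc (Suc i)"] by auto
  qed (use assms in simp)
  then show "\<And>i. i < length ss \<Longrightarrow> ss ! i = ss' ! i"
    using length_traj[OF w(1)] by simp
qed

lemma prob_full_path:
  assumes w: "(ss, xs, ys) \<in> traj T" and nz: "joint T Q PX1 PS1 q ss xs ys \<noteq> 0"
  shows "prob q (\<lambda>ss' xs' ys'. xs' = xs \<and> ss' ! 0 = ss ! 0 \<and> ys' = ys) = joint T Q PX1 PS1 q ss xs ys"
proof -
  have "prob q (\<lambda>ss' xs' ys'. xs' = xs \<and> ss' ! 0 = ss ! 0 \<and> ys' = ys)
      = (\<Sum>w'\<in>traj T. if w' = (ss, xs, ys) then joint T Q PX1 PS1 q ss xs ys else 0)"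
    unfolding prob_ev_expect expect_def
  proof (intro sum.cong refl, clarify)
    fix ss' xs' ys' assume w': "(ss', xs', ys') \<in> traj T"
    show "(if xs' = xs \<and> ss' ! 0 = ss ! 0 \<and> ys' = ys then 1 else 0) * joint T Q PX1 PS1 q ss' xs' ys'
        = (if (ss', xs', ys') = (ss, xs, ys) then joint T Q PX1 PS1 q ss xs ys else 0)"
      using battery_determined[OF w _ nz, of ss'] w' by (cases "joint T Q PX1 PS1 q ss' xs' ys' = 0") auto
  qed
  also have "\<dots> = joint T Q PX1 PS1 q ss xs ys"
    using w by simp
  finally show ?thesis .
qed

lemma expect_demand_initial:
  assumes q: "admissible q"
  shows "1 \<le> k \<Longrightarrow> k \<le> T \<Longrightarrow> xs \<in> seqs k mx \<Longrightarrow> s1 \<le> ms \<Longrightarrow>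
    expect q k (\<lambda>ss' xs' ys'. if xs' = xs \<and> ss' ! 0 = s1 then 1 else 0) = PS1 s1 * demand_prob k xs"
proof (induction k arbitrary: xs rule: nat_induct_at_least)
  case base
  then obtain x where xs: "xs = [x]" and "x \<le> mx"
    by (cases xs) (auto simp: seqs_def)
  have "expect q 1 (\<lambda>ss' xs' ys'. if xs' = xs \<and> ss' ! 0 = s1 then 1 else 0)
      = (\<Sum>s\<in>{0..ms}. \<Sum>x'\<in>{0..mx}. if x' = x then if s = s1 then
          PS1 s1 * PX1 x * (\<Sum>y\<in>{0..my}. q 1 [x] [s1] [] y) else 0 else 0)"
    unfolding expect_1 xs by (intro sum.cong) (auto simp: sum_distrib_left)
  also have "(\<Sum>y\<in>{0..my}. q 1 [x] [s1] [] y) = 1"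
    using \<open>x \<le> mx\<close> base.prems horizon_pos by (intro admissible_sum[OF q]) (auto simp: seqs_def)
  finally show ?case
    using \<open>x \<le> mx\<close> base.prems by (simp add: xs demand_prob_def)
next
  case (Suc k)
  obtain xs0 x where xs: "xs = xs0 @ [x]" and xs0: "xs0 \<in> seqs k mx" and "x \<le> mx"
    using Suc.prems(2) unfolding seqs_Suc by auto
  have "expect q (Suc k) (\<lambda>ss' xs' ys'. if xs' = xs \<and> ss' ! 0 = s1 then 1 else 0)
     = expect q k (\<lambda>ss' xs' ys'. (if xs' = xs0 \<and> ss' ! 0 = s1 then 1 else 0)
         * (\<Sum>x'\<in>{0..mx}. Q (last xs') x' * (if x' = x then 1 else 0)))"
    using Suc.hyps Suc.prems by (intro expect_Suc_factor[OF q]) (auto simp: xs length_traj nth_append)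
  also have "\<dots> = Q (last xs0) x * expect q k (\<lambda>ss' xs' ys'. if xs' = xs0 \<and> ss' ! 0 = s1 then 1 else 0)"
    using \<open>x \<le> mx\<close> by (subst expect_cmult[symmetric], intro expect_cong) (auto simp: if_distrib cong: if_cong)
  also have "\<dots> = PS1 s1 * demand_prob (Suc k) xs"
    using Suc xs0 by (simp add: xs demand_prob_snoc length_seqs)
  finally show ?case .
qed

lemma prob_output_telescope:
  assumes q: "admissible q" and w: "(ss, xs, ys) \<in> traj T" and nz: "joint T Q PX1 PS1 q ss xs ys \<noteq> 0"
  shows "prob q (\<lambda>ss' xs' ys'. ys' = ys) = (\<Prod>t\<in>{1..T}. out_cond_prob q t ys)"
    and "t \<in> {1..T} \<Longrightarrow> 0 < out_cond_prob q t ys"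
proof -
  define PY where "PY t = prob q (\<lambda>ss' xs' ys'. take t ys' = take t ys)" for t
  have "0 < PY t" for t
    unfolding PY_def using joint_le_prob[OF q w, of "\<lambda>ss' xs' ys'. take t ys' = take t ys"]
      joint_nonneg[OF q horizon_pos order_refl w] nz by simp
  moreover have "PY 0 = 1"
    using expect_one[OF q horizon_pos order_refl] by (simp add: PY_def prob_ev_expect)
  moreover have "PY T = prob q (\<lambda>ss' xs' ys'. ys' = ys)"
    unfolding PY_def prob_ev_expect using w by (intro expect_cong) (auto simp: length_traj)
  moreover have "out_cond_prob q t ys = PY t / PY (t - 1)" for t
    by (simp add: out_cond_prob_def PY_def)
  ultimately show "prob q (\<lambda>ss' xs' ys'. ys' = ys) = (\<Prod>t\<in>{1..T}. out_cond_prob q t ys)"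
    and "t \<in> {1..T} \<Longrightarrow> 0 < out_cond_prob q t ys"
    using prod_telescope''[of 0 T PY] by (auto simp: less_imp_neq[symmetric])
qed

lemma ln_information_density:
  assumes q: "admissible q" and w: "(ss, xs, ys) \<in> traj T" and nz: "joint T Q PX1 PS1 q ss xs ys \<noteq> 0"
  shows "ln (prob q (\<lambda>ss' xs' ys'. xs' = xs \<and> ss' ! 0 = ss ! 0 \<and> ys' = ys) /
             (prob q (\<lambda>ss' xs' ys'. xs' = xs \<and> ss' ! 0 = ss ! 0) * prob q (\<lambda>ss' xs' ys'. ys' = ys)))
       = (\<Sum>t\<in>{1..T}. ln (step_kernel q t ss xs ys / out_cond_prob q t ys))"
proof -
  have "prob q (\<lambda>ss' xs' ys'. xs' = xs \<and> ss' ! 0 = ss ! 0) = PS1 (ss ! 0) * demand_prob T xs"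
    unfolding prob_ev_expect using w horizon_pos
    by (intro expect_demand_initial[OF q]) (auto simp: traj_def nth_seqs_le)
  moreover have "PS1 (ss ! 0) * demand_prob T xs \<noteq> 0"
    using nz joint_support_eq[OF nz] by auto
  moreover have "\<forall>t\<in>{1..T}. 0 < step_kernel q t ss xs ys \<and> 0 < out_cond_prob q t ys"
    using step_kernel_pos[OF q horizon_pos order_refl w nz] prob_output_telescope(2)[OF q w nz] by blast
  ultimately show ?thesis
    using prob_full_path[OF w nz] joint_support_eq[OF nz] prob_output_telescope(1)[OF q w nz]
    by (simp add: prod_dividef[symmetric]) (rule ln_prod; force)
qed

lemma leakage_as_expect_sum:
  assumes q: "admissible q"
  shows "real T * leakage mx my ms T Q PX1 PS1 q =
    (\<Sum>t\<in>{1..T}. expect q T (\<lambda>ss xs ys. ln (step_kernel q t ss xs ys / out_cond_prob q t ys)))"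
proof -
  define g where "g = (\<lambda>(xs, s1, ys). ln (prob q (\<lambda>ss' xs' ys'. xs' = xs \<and> ss' ! 0 = s1 \<and> ys' = ys) /
      (prob q (\<lambda>ss' xs' ys'. xs' = xs \<and> ss' ! 0 = s1) * prob q (\<lambda>ss' xs' ys'. ys' = ys))))"
  have "real T * leakage mx my ms T Q PX1 PS1 q = (\<Sum>v\<in>seqs T mx \<times> {0..ms} \<times> seqs T my.
      expect q T (\<lambda>ss xs ys. 1 * (if (xs, ss ! 0, ys) = v then 1 else 0)) * g v)"
    unfolding leakage_def Let_def plogp_def g_def sum.cartesian_product prob_ev_expect
    using horizon_pos by (auto intro!: sum.cong expect_cong)
  also have "\<dots> = expect q T (\<lambda>ss xs ys. 1 * g (xs, ss ! 0, ys))"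
    using horizon_pos by (intro expect_fiber[symmetric]) (auto simp: traj_def intro: nth_seqs_le)
  also have "\<dots> = expect q T (\<lambda>ss xs ys. \<Sum>t\<in>{1..T}. ln (step_kernel q t ss xs ys / out_cond_prob q t ys))"
    by (intro expect_cong_support) (simp add: g_def ln_information_density[OF q])
  finally show ?thesis
    by (simp add: expect_sum)
qed

section \<open>Policies that see only the current state\<close>

definition info_density :: "policyB \<Rightarrow> policy \<Rightarrow> nat \<Rightarrow> nat \<Rightarrow> nat \<Rightarrow> nat list \<Rightarrow> real" where
  "info_density r q t x s yt = ln (r t x s (butlast yt) (last yt) /
     (prob q (\<lambda>ss' xs' ys'. take t ys' = yt) / prob q (\<lambda>ss' xs' ys'. take (t - 1) ys' = butlast yt)))"

lemma expect_state_out: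
  assumes t: "1 \<le> t" "t \<le> T"
  shows "expect q T (\<lambda>ss xs ys. f (xs ! (t - 1)) (ss ! (t - 1)) (take t ys)) =
    (\<Sum>x\<in>{0..mx}. \<Sum>s\<in>{0..ms}. \<Sum>yt\<in>seqs t my. prob_state_out q t x s yt * f x s yt)"
proof -
  have "expect q T (\<lambda>ss xs ys. 1 * (\<lambda>(x, s, yt). f x s yt) (xs ! (t - 1), ss ! (t - 1), take t ys))
      = (\<Sum>v\<in>{0..mx} \<times> {0..ms} \<times> seqs t my. expect q T (\<lambda>ss xs ys.
          1 * (if (xs ! (t - 1), ss ! (t - 1), take t ys) = v then 1 else 0)) * (\<lambda>(x, s, yt). f x s yt) v)"
    using t by (intro expect_fiber) (auto simp: traj_def intro: nth_seqs_le take_in_seqs)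
  also have "\<dots> = (\<Sum>x\<in>{0..mx}. \<Sum>s\<in>{0..ms}. \<Sum>yt\<in>seqs t my. prob_state_out q t x s yt * f x s yt)"
    unfolding sum.cartesian_product prob_state_out_def prob_ev_expect
    by (auto intro!: sum.cong expect_cong)
  finally show ?thesis by simp
qed

lemma ln_step_kernel_policyB:
  assumes t: "1 \<le> t" "t \<le> T" and w: "(ss, xs, ys) \<in> traj T"
  shows "ln (step_kernel (embedB r) t ss xs ys / out_cond_prob (embedB r) t ys)
       = info_density r (embedB r) t (xs ! (t - 1)) (ss ! (t - 1)) (take t ys)"
  using length_traj[OF w] t
  by (simp add: step_kernel_def embedB_def out_cond_prob_def info_density_def prefix_decomp)

lemma expect_term_policyB:
  assumes t: "1 \<le> t" "t \<le> T"
  shows "expect (embedB r) T (\<lambda>ss xs ys. ln (step_kernel (embedB r) t ss xs ys / out_cond_prob (embedB r) t ys))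
       = cond_mi mx my ms T Q PX1 PS1 r t"
proof -
  have "expect (embedB r) T (\<lambda>ss xs ys. ln (step_kernel (embedB r) t ss xs ys / out_cond_prob (embedB r) t ys))
      = expect (embedB r) T (\<lambda>ss xs ys. info_density r (embedB r) t (xs ! (t - 1)) (ss ! (t - 1)) (take t ys))"
    using t by (intro expect_cong ln_step_kernel_policyB)
  also have "\<dots> = cond_mi mx my ms T Q PX1 PS1 r t"
    unfolding expect_state_out[OF t]
    unfolding cond_mi_def Let_def prob_state_out_def info_density_def
    by (intro sum.cong refl) simp
  finally show ?thesis .
qed

section \<open>Optimality of the reduced policy\<close>

lemma admissible_fun_upd:
  assumes "admissible q1" "admissible q2"
  shows "admissible (q1(t := q2 t))"
  using assms unfolding policyA_def by simp

definition joint_except_last :: "policy \<Rightarrow> nat \<Rightarrow> nat list \<Rightarrow> nat list \<Rightarrow> nat list \<Rightarrow> real" where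
  "joint_except_last q t ss xs ys = PS1 (ss ! 0) * PX1 (xs ! 0) * (\<Prod>\<tau>\<in>{1..<t}. step_kernel q \<tau> ss xs ys) *
     (\<Prod>\<tau>\<in>{2..t}. (if int (ss ! (\<tau> - 1)) = int (ss ! (\<tau> - 2)) - int (xs ! (\<tau> - 2)) + int (ys ! (\<tau> - 2))
                     then 1 else 0) * Q (xs ! (\<tau> - 2)) (xs ! (\<tau> - 1)))"

lemma joint_eq_except_last:
  assumes "1 \<le> t"
  shows "joint t Q PX1 PS1 q ss xs ys = joint_except_last q t ss xs ys * step_kernel q t ss xs ys"
proof -
  have "{1..t} = insert t {1..<t}" using assms by auto
  then show ?thesis
    by (simp add: joint_def joint_except_last_def step_kernel_def ac_simps)
qed

lemma joint_except_last_fun_upd: "joint_except_last (q1(t := q2 t)) t ss xs ys = joint_except_last q1 t ss xs ys"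
  unfolding joint_except_last_def step_kernel_def by (intro arg_cong2[where f="(*)"] refl prod.cong) auto

lemma step_kernel_take:
  assumes "1 \<le> t" "t \<le> length ys"
  shows "step_kernel q t (take t ss) (take t xs) (take t ys) = step_kernel q t ss xs ys"
  using assms by (simp add: step_kernel_def)

text \<open>Replacing the time-\<open>t\<close> kernel of \<open>q\<close> by that of \<open>q2\<close> gives another admissible policy,
  whose total mass bounds the expected likelihood ratio.\<close>

lemma expect_step_kernel_ratio_le_1:
  assumes q: "admissible q" and q2: "admissible q2" and t: "1 \<le> t" "t \<le> T"
  shows "expect q T (\<lambda>ss xs ys. if step_kernel q t ss xs ys = 0 then 0
           else step_kernel q2 t ss xs ys / step_kernel q t ss xs ys) \<le> 1"
    (is "expect q T ?ratio \<le> 1")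
proof -
  have "expect q T ?ratio = expect q T (\<lambda>ss xs ys. ?ratio (take t ss) (take t xs) (take t ys))"
    using t by (intro expect_cong) (simp add: length_traj step_kernel_take)
  also have "\<dots> = expect q t ?ratio"
    using t by (intro expect_prefix[OF q]) auto
  also have "\<dots> \<le> expect (q(t := q2 t)) t (\<lambda>_ _ _. 1)"
    unfolding expect_def
  proof (intro sum_mono, clarify)
    fix ss xs ys assume w: "(ss, xs, ys) \<in> traj t"
    have "0 \<le> joint t Q PX1 PS1 (q(t := q2 t)) ss xs ys"
      using joint_nonneg[OF admissible_fun_upd[OF q q2] t w] .
    then show "?ratio ss xs ys * joint t Q PX1 PS1 q ss xs ys \<le> 1 * joint t Q PX1 PS1 (q(t := q2 t)) ss xs ys"
      using t by (simp add: joint_eq_except_last joint_except_last_fun_upd) (simp add: step_kernel_def)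
  qed
  also have "\<dots> = 1"
    using expect_one[OF admissible_fun_upd[OF q q2] t] .
  finally show ?thesis .
qed

lemma reduced_policy_pos:
  assumes q: "admissible q" and t: "1 \<le> t" "t \<le> T" and w: "(ss, xs, ys) \<in> traj T"
    and nz: "joint T Q PX1 PS1 q ss xs ys \<noteq> 0"
  shows "0 < step_kernel (embedB (reduced_policy q)) t ss xs ys"
proof -
  define x where "x = xs ! (t - 1)"
  define s where "s = ss ! (t - 1)"
  define c where "c = take (t - 1) ys"
  define y where "y = ys ! (t - 1)"
  have l: "length ss = T" "length xs = T" "length ys = T"
    using length_traj[OF w] by auto
  have "y \<le> my"
    using w t by (auto simp: y_def traj_def nth_seqs_le)
  have "joint T Q PX1 PS1 q ss xs ys \<le> prob_state_out q t x s (c @ [y])"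
    unfolding prob_state_out_def x_def s_def c_def y_def using t l prefix_decomp(3)[of t ys]
    by (intro joint_le_prob[OF q w]) simp
  then have pos: "0 < prob_state_out q t x s (c @ [y])"
    using joint_nonneg[OF q horizon_pos order_refl w] nz by simp
  moreover have "prob_state_out q t x s (c @ [y]) \<le> (\<Sum>y'\<in>{0..my}. prob_state_out q t x s (c @ [y']))"
    using \<open>y \<le> my\<close> by (intro member_le_sum prob_state_out_nonneg[OF q]) auto
  ultimately show ?thesis
    using t l by (simp add: step_kernel_def embedB_def reduced_policy_def prefix_decomp x_def s_def c_def y_def)
qed

lemma expect_info_density_reduced_policy:
  assumes q: "admissible q" and t: "1 \<le> t" "t \<le> T"
  defines "r \<equiv> reduced_policy q"
  shows "expect (embedB r) T (\<lambda>ss xs ys. info_density r (embedB r) t (xs ! (t - 1)) (ss ! (t - 1)) (take t ys))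
       = expect q T (\<lambda>ss xs ys. info_density r q t (xs ! (t - 1)) (ss ! (t - 1)) (take t ys))"
  unfolding expect_state_out[OF t]
proof (intro sum.cong refl arg_cong2[where f="(*)"])
  fix x s yt assume "x \<in> {0..mx}" "s \<in> {0..ms}" "yt \<in> seqs t my"
  then show "prob_state_out (embedB r) t x s yt = prob_state_out q t x s yt"
    and "info_density r (embedB r) t x s yt = info_density r q t x s yt"
    using t prob_state_out_reduced_policy[OF q] butlast_in_seqs[of yt t my]
    by (simp_all add: r_def info_density_def prob_out_hist_reduced_policy[OF q])
qed

lemma info_density_reduced_policy_le:
  assumes q: "admissible q" and t: "1 \<le> t" "t \<le> T" and w: "(ss, xs, ys) \<in> traj T"
    and nz: "joint T Q PX1 PS1 q ss xs ys \<noteq> 0"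
  defines "r \<equiv> reduced_policy q"
  shows "info_density r q t (xs ! (t - 1)) (ss ! (t - 1)) (take t ys)
    \<le> ln (step_kernel q t ss xs ys / out_cond_prob q t ys) - (1 - step_kernel (embedB r) t ss xs ys / step_kernel q t ss xs ys)"
proof -
  let ?kq = "step_kernel q t ss xs ys" and ?kr = "step_kernel (embedB r) t ss xs ys" and ?o = "out_cond_prob q t ys"
  have pos: "0 < ?kq" "0 < ?kr" "0 < ?o"
    using t step_kernel_pos[OF q horizon_pos order_refl w nz] reduced_policy_pos[OF q t w nz]
      prob_output_telescope(2)[OF q w nz] by (auto simp: r_def)
  have "info_density r q t (xs ! (t - 1)) (ss ! (t - 1)) (take t ys) = ln (?kr / ?o)"
    using t length_traj[OF w]
    by (simp add: info_density_def step_kernel_def embedB_def out_cond_prob_def prefix_decomp)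
  also have "\<dots> = ln (?kq / ?o) + ln (?kr / ?kq)"
    using pos by (simp add: ln_div)
  also have "\<dots> \<le> ln (?kq / ?o) + (?kr / ?kq - 1)"
    using pos by (simp add: ln_le_minus_one)
  finally show ?thesis by simp
qed

text \<open>The Gibbs-type step: the reduced policy has the same marginals of \<open>(X\<^sub>t, S\<^sub>t, Y\<^sup>t)\<close>, and
  \<open>ln u \<le> u - 1\<close> together with the likelihood-ratio bound shows that its \<open>t\<close>-th term is smaller.\<close>

lemma reduced_policy_term_le:
  assumes q: "admissible q" and t: "1 \<le> t" "t \<le> T"
  defines "q' \<equiv> embedB (reduced_policy q)"
  shows "expect q' T (\<lambda>ss xs ys. ln (step_kernel q' t ss xs ys / out_cond_prob q' t ys))
       \<le> expect q T (\<lambda>ss xs ys. ln (step_kernel q t ss xs ys / out_cond_prob q t ys))"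
proof -
  define ratio where "ratio = (\<lambda>ss xs ys.
    if step_kernel q t ss xs ys = 0 then 0 else step_kernel q' t ss xs ys / step_kernel q t ss xs ys)"
  have "expect q' T (\<lambda>ss xs ys. ln (step_kernel q' t ss xs ys / out_cond_prob q' t ys))
      = expect q T (\<lambda>ss xs ys. info_density (reduced_policy q) q t (xs ! (t - 1)) (ss ! (t - 1)) (take t ys))"
    unfolding q'_def using t
    by (subst expect_info_density_reduced_policy[OF q t, symmetric]) (intro expect_cong ln_step_kernel_policyB)
  also have "\<dots> \<le> expect q T (\<lambda>ss xs ys. ln (step_kernel q t ss xs ys / out_cond_prob q t ys) - (1 - ratio ss xs ys))"
  proof (rule expect_mono_support[OF q horizon_pos order_refl])
    fix ss xs ys assume w: "(ss, xs, ys) \<in> traj T" and nz: "joint T Q PX1 PS1 q ss xs ys \<noteq> 0"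
    have "0 < step_kernel q t ss xs ys"
      using t by (intro step_kernel_pos[OF q horizon_pos order_refl w nz]) auto
    then show "info_density (reduced_policy q) q t (xs ! (t - 1)) (ss ! (t - 1)) (take t ys)
        \<le> ln (step_kernel q t ss xs ys / out_cond_prob q t ys) - (1 - ratio ss xs ys)"
      using info_density_reduced_policy_le[OF q t w nz] by (simp add: ratio_def q'_def)
  qed
  also have "\<dots> = expect q T (\<lambda>ss xs ys. ln (step_kernel q t ss xs ys / out_cond_prob q t ys))
      - (1 - expect q T ratio)"
    using expect_one[OF q horizon_pos order_refl] by (simp add: expect_diff)
  also have "\<dots> \<le> expect q T (\<lambda>ss xs ys. ln (step_kernel q t ss xs ys / out_cond_prob q t ys))"
    using expect_step_kernel_ratio_le_1[OF q admissible_reduced_policy[OF q] t, folded q'_def]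
    by (simp add: ratio_def)
  finally show ?thesis .
qed

end

theorem proposition1:
  fixes mx my ms T :: nat
    and Q :: "nat \<Rightarrow> nat \<Rightarrow> real" and PX1 PS1 :: "nat \<Rightarrow> real"
  assumes "mx \<le> my" and "T \<ge> 1"
    and "stochastic Q mx" and "irreducible_mc Q mx" and "aperiodic_mc Q mx"
    and "is_pmf_on PX1 mx" and "is_pmf_on PS1 ms"
  shows "(\<forall>q. policyA mx my ms T q \<longrightarrow>
            (\<exists>r. policyA mx my ms T (embedB r) \<and>
                 leakage mx my ms T Q PX1 PS1 (embedB r) \<le> leakage mx my ms T Q PX1 PS1 q))
       \<and> (\<forall>r. policyA mx my ms T (embedB r) \<longrightarrow>
            leakage mx my ms T Q PX1 PS1 (embedB r)
              = (\<Sum>t\<in>{1..T}. cond_mi mx my ms T Q PX1 PS1 r t) / real T)"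
proof -
  interpret charging_model mx my ms T Q PX1 PS1
    using assms by unfold_locales auto
  have T: "0 < real T" using assms(2) by simp
  have "leakage mx my ms T Q PX1 PS1 (embedB (reduced_policy q)) \<le> leakage mx my ms T Q PX1 PS1 q"
    if q: "admissible q" for q
  proof -
    have "real T * leakage mx my ms T Q PX1 PS1 (embedB (reduced_policy q)) \<le> real T * leakage mx my ms T Q PX1 PS1 q"
      unfolding leakage_as_expect_sum[OF q] leakage_as_expect_sum[OF admissible_reduced_policy[OF q]]
      by (intro sum_mono reduced_policy_term_le[OF q]) auto
    then show ?thesis using T by simp
  qed
  moreover have "leakage mx my ms T Q PX1 PS1 (embedB r) = (\<Sum>t\<in>{1..T}. cond_mi mx my ms T Q PX1 PS1 r t) / real T"
    if r: "admissible (embedB r)" for r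
  proof -
    have "real T * leakage mx my ms T Q PX1 PS1 (embedB r) = (\<Sum>t\<in>{1..T}. cond_mi mx my ms T Q PX1 PS1 r t)"
      unfolding leakage_as_expect_sum[OF r] by (intro sum.cong refl expect_term_policyB) auto
    then show ?thesis using T by (simp add: field_simps)
  qed
  ultimately show ?thesis
    using admissible_reduced_policy by blast
qed

end
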